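(* Let $\ell\in\mathbb{N}$, $h\in\bigwedge(V_{2\ell}^* )$, let $G$ be an Eulerian graph with Eulerian orientation $\omega$ and compatible local ordering $\kappa$, and let $\phi:E(G)\to[\ell]$. Let $C$ be a $\kappa$-circuit, let $\omega'$ be obtained from $\omega$ by reversing the orientation of every edge of $C$, and let $\kappa'$ be obtained from $\kappa$ by, at each passage of $C$ through a vertex $v$ via consecutive arcs $a$ (incoming) and $a'$ (outgoing, with $\kappa_v^-(a)+1=\kappa_v^+(a')$), interchanging the labels of $a$ and $a'$ (so $\kappa'$ is compatible with $\omega'$). Then $s_{h,\phi}(G,\omega,\kappa)=s_{h,\phi}(G,\omega',\kappa')$.
   Context: Setup: $V_{2\ell}=\mathbb{C}^{2\ell}$ with standard basis $e_1,\dots,e_{2\ell}$; $f_i=-e_{i+\ell}$ for $i\le\ell$, $f_i=e_{i-\ell}$ for $i>\ell$. $\bigwedge(V_{2\ell}^* )=\bigoplus_{n=0}^{2\ell}\bigwedge^n(V_{2\ell}^* )$, and $h$ applied to an $n$-fold tensor means its skew-symmetric component $h^n$ applied to it. Graphs may have loops and multiple edges; Eulerian means every vertex has even degree. An Eulerian orientation $\omega$ makes in-degree equal out-degree at each vertex (a loop gives one incoming and one outgoing arc). A compatible local ordering $\kappa$ consists at each vertex $v$ of degree $d(v)$ of bijections $\kappa_v^-:\delta^-(v)\to\{1,3,\dots,d(v)-1\}$ and $\kappa_v^+:\delta^+(v)\to\{2,4,\dots,d(v)\}$; $\kappa_v^{-1}(i)$ is the arc at $v$ with label $i$. The $\kappa$-circuits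 are the closed walks $(v_1,a_1,\dots,a_i,v_i,a_{i+1},\dots,v_1)$ with $\kappa^-_{v_i}(a_i)+1=\kappa^+_{v_i}(a_{i+1})$ into which $\kappa$ decomposes the edge set; $c(G,\kappa)$ is their number. For $\phi:E(G)\to[\ell]$ define $s_{h,\phi}(G,\omega,\kappa)=(-1)^{c(G,\kappa)}\sum_{\psi:E(G)\to\{0,\ell\}}\prod_{v\in V(G)} h\big(\bigotimes_{i=1,3,\dots,d(v)-1} e_{(\phi+\psi)(\kappa_v^{-1}(i))}\otimes f_{(\phi+\psi)(\kappa_v^{-1}(i+1))}\big)$, where $(\phi+\psi)(e)=\phi(e)+\psi(e)$. *)

theory Defs
  imports Complex_Main "HOL-Library.FuncSet"
begin

text \<open>Vectors of C^{2l} are functions nat => complex supported on {1..2l}.\<close>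
definition Vsp :: "nat \<Rightarrow> (nat \<Rightarrow> complex) set" where
  "Vsp l = {x. \<forall>i. (i < 1 \<or> i > 2*l) \<longrightarrow> x i = 0}"

definition evec :: "nat \<Rightarrow> (nat \<Rightarrow> complex)" where
  "evec i = (\<lambda>j. if j = i then 1 else 0)"

definition fvec :: "nat \<Rightarrow> nat \<Rightarrow> (nat \<Rightarrow> complex)" where
  "fvec l i = (if i \<le> l then (\<lambda>j. - evec (i + l) j) else evec (i - l))"

text \<open>An element h of the exterior algebra of the dual of V_{2l}: the family of its
  homogeneous components h^n, i.e. skew-symmetric (alternating) multilinear forms on V_{2l}^n.
  h applied to a list of n vectors is h^n applied to them.\<close>
definition exterior_form :: "nat \<Rightarrow> ((nat \<Rightarrow> complex) list \<Rightarrow> complex) \<Rightarrow> bool" where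
  "exterior_form l h \<longleftrightarrow>
    (\<forall>xs k x y a b. set xs \<subseteq> Vsp l \<and> k < length xs \<and> x \<in> Vsp l \<and> y \<in> Vsp l \<longrightarrow>
        h (xs[k := (\<lambda>t. a * x t + b * y t)]) = a * h (xs[k := x]) + b * h (xs[k := y])) \<and>
    (\<forall>xs i j. set xs \<subseteq> Vsp l \<and> i < length xs \<and> j < length xs \<and> i \<noteq> j \<and> xs ! i = xs ! j
        \<longrightarrow> h xs = 0)"

text \<open>A finite graph with loops and multiple edges: vertex set V, edge set E,
  each edge e with its set of endpoints inc e (one element for a loop).\<close>
definition graph :: "'v set \<Rightarrow> 'e set \<Rightarrow> ('e \<Rightarrow> 'v set) \<Rightarrow> bool" where
  "graph V E inc \<longleftrightarrow> finite V \<and> finite E \<and>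
     (\<forall>e\<in>E. inc e \<subseteq> V \<and> 1 \<le> card (inc e) \<and> card (inc e) \<le> 2)"

text \<open>degree: loops count twice\<close>
definition deg :: "'e set \<Rightarrow> ('e \<Rightarrow> 'v set) \<Rightarrow> 'v \<Rightarrow> nat" where
  "deg E inc v = card {e\<in>E. v \<in> inc e} + card {e\<in>E. inc e = {v}}"

definition eulerian :: "'v set \<Rightarrow> 'e set \<Rightarrow> ('e \<Rightarrow> 'v set) \<Rightarrow> bool" where
  "eulerian V E inc \<longleftrightarrow> graph V E inc \<and> (\<forall>v\<in>V. even (deg E inc v))"

text \<open>An orientation assigns to each edge a pair (tail, head) of its endpoints.\<close>
definition orientation :: "'e set \<Rightarrow> ('e \<Rightarrow> 'v set) \<Rightarrow> ('e \<Rightarrow> 'v \<times> 'v) \<Rightarrow> bool" where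
  "orientation E inc \<omega> \<longleftrightarrow> (\<forall>e\<in>E. {fst (\<omega> e), snd (\<omega> e)} = inc e)"

definition eulerian_orientation ::
  "'v set \<Rightarrow> 'e set \<Rightarrow> ('e \<Rightarrow> 'v set) \<Rightarrow> ('e \<Rightarrow> 'v \<times> 'v) \<Rightarrow> bool" where
  "eulerian_orientation V E inc \<omega> \<longleftrightarrow> orientation E inc \<omega> \<and>
     (\<forall>v\<in>V. card {e\<in>E. snd (\<omega> e) = v} = card {e\<in>E. fst (\<omega> e) = v})"

text \<open>A local ordering is given by kin (label of the incoming arc of e at its head)
  and kout (label of the outgoing arc of e at its tail).  A loop at v gives
  one incoming and one outgoing arc at v.\<close>
definition compatible_ordering ::
  "'v set \<Rightarrow> 'e set \<Rightarrow> ('e \<Rightarrow> 'v set) \<Rightarrow> ('e \<Rightarrow> 'v \<times> 'v) \<Rightarrow> ('e \<Rightarrow> nat) \<Rightarrow> ('e \<Rightarrow> nat) \<Rightarrow> bool" where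
  "compatible_ordering V E inc \<omega> kin kout \<longleftrightarrow>
     (\<forall>v\<in>V. bij_betw kin {e\<in>E. snd (\<omega> e) = v} {i. odd i \<and> i < deg E inc v} \<and>
             bij_betw kout {e\<in>E. fst (\<omega> e) = v} {i. even i \<and> 0 < i \<and> i \<le> deg E inc v})"

definition follows :: "('e \<Rightarrow> 'v \<times> 'v) \<Rightarrow> ('e \<Rightarrow> nat) \<Rightarrow> ('e \<Rightarrow> nat) \<Rightarrow> 'e \<Rightarrow> 'e \<Rightarrow> bool" where
  "follows \<omega> kin kout e e' \<longleftrightarrow> fst (\<omega> e') = snd (\<omega> e) \<and> kout e' = kin e + 1"

definition kcircuit ::
  "'e set \<Rightarrow> ('e \<Rightarrow> 'v \<times> 'v) \<Rightarrow> ('e \<Rightarrow> nat) \<Rightarrow> ('e \<Rightarrow> nat) \<Rightarrow> 'e list \<Rightarrow> bool" where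
  "kcircuit E \<omega> kin kout es \<longleftrightarrow> es \<noteq> [] \<and> distinct es \<and> set es \<subseteq> E \<and>
     (\<forall>i < length es. follows \<omega> kin kout (es ! i) (es ! ((i + 1) mod length es)))"

text \<open>c(G,kappa): the number of kappa-circuits (a circuit is identified with its edge set,
  so cyclic rotations of the list are not counted twice).\<close>
definition ncirc :: "'e set \<Rightarrow> ('e \<Rightarrow> 'v \<times> 'v) \<Rightarrow> ('e \<Rightarrow> nat) \<Rightarrow> ('e \<Rightarrow> nat) \<Rightarrow> nat" where
  "ncirc E \<omega> kin kout = card {set es | es. kcircuit E \<omega> kin kout es}"

definition kinv_in :: "'e set \<Rightarrow> ('e \<Rightarrow> 'v \<times> 'v) \<Rightarrow> ('e \<Rightarrow> nat) \<Rightarrow> 'v \<Rightarrow> nat \<Rightarrow> 'e" where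
  "kinv_in E \<omega> kin v i = (THE e. e \<in> E \<and> snd (\<omega> e) = v \<and> kin e = i)"

definition kinv_out :: "'e set \<Rightarrow> ('e \<Rightarrow> 'v \<times> 'v) \<Rightarrow> ('e \<Rightarrow> nat) \<Rightarrow> 'v \<Rightarrow> nat \<Rightarrow> 'e" where
  "kinv_out E \<omega> kout v i = (THE e. e \<in> E \<and> fst (\<omega> e) = v \<and> kout e = i)"

text \<open>The tensor e_{g(kappa^{-1}(1))} (x) f_{g(kappa^{-1}(2))} (x) ... (x) f_{g(kappa^{-1}(d(v)))}
  at vertex v, as the list of its factors.\<close>
definition vertex_tensor ::
  "nat \<Rightarrow> 'e set \<Rightarrow> ('e \<Rightarrow> 'v set) \<Rightarrow> ('e \<Rightarrow> 'v \<times> 'v) \<Rightarrow> ('e \<Rightarrow> nat) \<Rightarrow> ('e \<Rightarrow> nat)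
    \<Rightarrow> ('e \<Rightarrow> nat) \<Rightarrow> 'v \<Rightarrow> (nat \<Rightarrow> complex) list" where
  "vertex_tensor l E inc \<omega> kin kout g v =
     concat (map (\<lambda>j. [evec (g (kinv_in E \<omega> kin v (2*j+1))),
                       fvec l (g (kinv_out E \<omega> kout v (2*j+2)))]) [0..<deg E inc v div 2])"

definition s_val ::
  "nat \<Rightarrow> ((nat \<Rightarrow> complex) list \<Rightarrow> complex) \<Rightarrow> ('e \<Rightarrow> nat) \<Rightarrow> 'v set \<Rightarrow> 'e set \<Rightarrow> ('e \<Rightarrow> 'v set)
    \<Rightarrow> ('e \<Rightarrow> 'v \<times> 'v) \<Rightarrow> ('e \<Rightarrow> nat) \<Rightarrow> ('e \<Rightarrow> nat) \<Rightarrow> complex" where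
  "s_val l h \<phi> V E inc \<omega> kin kout =
     (-1) ^ ncirc E \<omega> kin kout *
     (\<Sum>\<psi> \<in> PiE E (\<lambda>_. {0, l}).
        \<Prod>v\<in>V. h (vertex_tensor l E inc \<omega> kin kout (\<lambda>e. \<phi> e + \<psi> e) v))"

end

theory Submission
  imports Defs
begin

text \<open>Reflecting the summation variable on the edges of \<open>C\<close>, \<open>\<psi> e \<mapsto> l - \<psi> e\<close>, is a bijection of
  the summation range.  At a passage of \<open>C\<close> through \<open>v\<close> by arcs \<open>a\<close>, \<open>b\<close>, the ordering \<open>\<kappa>'\<close> puts \<open>b\<close>
  into the slot of \<open>a\<close> and \<open>a\<close> into that of \<open>b\<close>; since \<open>e\<^sub>p\<^sub>+\<^sub>l = -f\<^sub>p\<close> and \<open>f\<^sub>p\<^sub>+\<^sub>l = e\<^sub>p\<close> for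
  \<open>p \<le> l\<close>, after the reflection the new vertex tensor is the old one with the two factors of each
  such pair exchanged and multiplied by signs.  By skew-symmetry of \<open>h\<close> every vertex factor thus
  changes by a sign, and the signs cancel globally because each edge of \<open>C\<close> contributes its
  sign twice, at its head and at its tail.  Finally \<open>rev C\<close> is a \<open>\<kappa>'\<close>-circuit and all other
  \<open>\<kappa>\<close>-circuits are untouched, so \<open>c(G,\<kappa>) = c(G,\<kappa>')\<close>.\<close>

section \<open>Alternating forms\<close>

lemma exterior_form_linear:
  assumes "exterior_form l h" "set xs \<subseteq> Vsp l" "k < length xs" "x \<in> Vsp l" "y \<in> Vsp l"
  shows "h (xs[k := (\<lambda>t. a * x t + b * y t)]) = a * h (xs[k := x]) + b * h (xs[k := y])"
  using assms unfolding exterior_form_def by blast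

lemma exterior_form_alternating:
  assumes "exterior_form l h" "set xs \<subseteq> Vsp l" "i < length xs" "j < length xs" "i \<noteq> j"
    and "xs ! i = xs ! j"
  shows "h xs = 0"
  using assms unfolding exterior_form_def by blast

lemma scale_in_Vsp: "x \<in> Vsp l \<Longrightarrow> (\<lambda>t. c * x t) \<in> Vsp l"
  by (simp add: Vsp_def)

lemma evec_in_Vsp: "1 \<le> i \<Longrightarrow> i \<le> 2*l \<Longrightarrow> evec i \<in> Vsp l"
  by (auto simp: Vsp_def evec_def)

lemma fvec_in_Vsp: "1 \<le> i \<Longrightarrow> i \<le> 2*l \<Longrightarrow> fvec l i \<in> Vsp l"
  by (auto simp: Vsp_def evec_def fvec_def)

lemma set_list_update_subset: "set xs \<subseteq> A \<Longrightarrow> x \<in> A \<Longrightarrow> set (xs[k := x]) \<subseteq> A"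
  by (meson order.trans set_update_subset_insert insert_subset)

lemma exterior_form_scale:
  assumes "exterior_form l h" "set xs \<subseteq> Vsp l" "k < length xs" "x \<in> Vsp l"
  shows "h (xs[k := (\<lambda>t. c * x t)]) = c * h (xs[k := x])"
  using exterior_form_linear[OF assms assms(4), of c 0] by simp

lemma exterior_form_swap:
  assumes ext: "exterior_form l h" and S: "set xs \<subseteq> Vsp l"
    and i: "i < length xs" and j: "j < length xs" and ij: "i \<noteq> j"
  shows "h (xs[i := xs ! j, j := xs ! i]) = - h xs"
proof -
  define x where "x = xs ! i"
  define y where "y = xs ! j"
  define s where "s = (\<lambda>t. 1 * x t + 1 * y t)"
  have xV: "x \<in> Vsp l" and yV: "y \<in> Vsp l" using S i j by (auto simp: x_def y_def)
  have sV: "s \<in> Vsp l" using xV yV by (simp add: s_def Vsp_def)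
  have Sx: "set (xs[j := x]) \<subseteq> Vsp l" and Ss: "set (xs[i := s]) \<subseteq> Vsp l"
    using S xV sV by (simp_all add: set_list_update_subset)
  \<comment> \<open>expand \<open>0 = h(\<dots>, x + y, \<dots>, x + y, \<dots>)\<close> in both slots\<close>
  have "0 = h (xs[i := s, j := s])"
    by (rule exterior_form_alternating[OF ext _ _ _ ij, symmetric])
      (use Ss sV i j ij in \<open>auto simp: set_list_update_subset\<close>)
  also have "\<dots> = h (xs[i := s, j := x]) + h (xs[i := s, j := y])"
    using exterior_form_linear[OF ext Ss _ xV yV, of j 1 1] j by (simp add: s_def)
  also have "xs[i := s, j := x] = xs[j := x, i := s]"
    using ij by (simp add: list_update_swap)
  also have "h \<dots> = h (xs[j := x, i := x]) + h (xs[j := x, i := y])"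
    using exterior_form_linear[OF ext Sx _ xV yV, of i 1 1] i by (simp add: s_def)
  also have "h (xs[j := x, i := x]) = 0"
    by (rule exterior_form_alternating[OF ext _ _ _ ij])
      (use Sx xV i j ij in \<open>auto simp: set_list_update_subset\<close>)
  also have "xs[j := x, i := y] = xs[i := xs ! j, j := xs ! i]"
    using ij by (simp add: x_def y_def list_update_swap)
  also have "xs[i := s, j := y] = xs[i := s]"
    using ij by (metis list_update_id nth_list_update_neq y_def)
  also have "h (xs[i := s]) = h (xs[i := x]) + h (xs[i := y])"
    using exterior_form_linear[OF ext S i xV yV, of 1 1] by (simp add: s_def)
  also have "xs[i := x] = xs"
    by (simp add: x_def)
  also have "h (xs[i := y]) = 0"
    by (rule exterior_form_alternating[OF ext _ _ _ ij])
      (use S yV i j ij in \<open>auto simp: set_list_update_subset y_def\<close>)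
  finally show ?thesis
    by (simp add: add_eq_0_iff)
qed

definition interleave :: "(nat \<Rightarrow> 'a) \<Rightarrow> (nat \<Rightarrow> 'a) \<Rightarrow> nat \<Rightarrow> 'a list" where
  "interleave p q m = map (\<lambda>i. if even i then p (i div 2) else q (i div 2)) [0..<2*m]"

lemma length_interleave [simp]: "length (interleave p q m) = 2*m"
  by (simp add: interleave_def)

lemma concat_map_pair_eq_interleave: "concat (map (\<lambda>j. [p j, q j]) [0..<m]) = interleave p q m"
proof (induction m)
  case 0
  then show ?case by (simp add: interleave_def)
next
  case (Suc m)
  have "[0..<2 * Suc m] = [0..<2*m] @ [2*m, 2*m+1]"
    by (simp add: numeral_2_eq_2)
  then show ?case
    using Suc by (simp add: interleave_def)
qed

lemma interleave_cong:
  "(\<And>j. j < m \<Longrightarrow> p j = p' j \<and> q j = q' j) \<Longrightarrow> interleave p q m = interleave p' q' m"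
  unfolding interleave_def by (rule map_cong) auto

lemma set_interleave_subset:
  "\<forall>j<m. p j \<in> A \<and> q j \<in> A \<Longrightarrow> set (interleave p q m) \<subseteq> A"
  by (auto simp: interleave_def)

lemma exterior_form_interleave_exchange:
  assumes ext: "exterior_form l h" and V: "\<forall>j<m. p j \<in> Vsp l \<and> q j \<in> Vsp l" and j: "j < m"
  shows "h (interleave (p(j := (\<lambda>t. c * q j t))) (q(j := (\<lambda>t. d * p j t))) m)
    = - (c * d) * h (interleave p q m)"
proof -
  define zs where "zs = interleave p q m"
  have zS: "set zs \<subseteq> Vsp l"
    unfolding zs_def by (rule set_interleave_subset[OF V])
  have pV: "p j \<in> Vsp l" and qV: "q j \<in> Vsp l" using V j by auto
  have len: "2*j < length zs" "2*j+1 < length zs" using j by (auto simp: zs_def)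
  have nth: "zs ! (2*j) = p j" "zs ! (2*j+1) = q j"
    using j by (auto simp: zs_def interleave_def nth_append)
  have "interleave (p(j := (\<lambda>t. c * q j t))) (q(j := (\<lambda>t. d * p j t))) m
      = zs[2*j := (\<lambda>t. c * q j t), 2*j+1 := (\<lambda>t. d * p j t)]"
    by (rule nth_equalityI) (auto simp: zs_def interleave_def nth_list_update)
  then have "h (interleave (p(j := (\<lambda>t. c * q j t))) (q(j := (\<lambda>t. d * p j t))) m)
      = d * h (zs[2*j := (\<lambda>t. c * q j t), 2*j+1 := p j])"
    using exterior_form_scale[OF ext _ _ pV] zS qV len
    by (simp add: set_list_update_subset scale_in_Vsp)
  also have "zs[2*j := (\<lambda>t. c * q j t), 2*j+1 := p j] = zs[2*j+1 := p j, 2*j := (\<lambda>t. c * q j t)]"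
    by (simp add: list_update_swap)
  also have "h \<dots> = c * h (zs[2*j+1 := p j, 2*j := q j])"
    using exterior_form_scale[OF ext _ _ qV] zS pV len by (simp add: set_list_update_subset)
  also have "zs[2*j+1 := p j, 2*j := q j] = zs[2*j := zs ! (2*j+1), 2*j+1 := zs ! (2*j)]"
    unfolding nth by (rule list_update_swap) simp
  also have "h \<dots> = - h zs"
    using exterior_form_swap[OF ext zS len] by simp
  also have "d * (c * - h zs) = - (c * d) * h (interleave p q m)"
    by (simp add: zs_def)
  finally show ?thesis .
qed

lemma exterior_form_interleave_exchange_set:
  assumes ext: "exterior_form l h" and V: "\<forall>j<m. p j \<in> Vsp l \<and> q j \<in> Vsp l"
    and J: "J \<subseteq> {..<m}"
    and exchanged: "\<And>j. j \<in> J \<Longrightarrow> p' j = (\<lambda>t. c j * q j t) \<and> q' j = (\<lambda>t. d j * p j t)"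
    and kept: "\<And>j. j < m \<Longrightarrow> j \<notin> J \<Longrightarrow> p' j = p j \<and> q' j = q j"
  shows "h (interleave p' q' m) = (\<Prod>j\<in>J. - (c j * d j)) * h (interleave p q m)"
proof -
  have "interleave p' q' m
      = interleave (\<lambda>j. if j \<in> J then (\<lambda>t. c j * q j t) else p j)
                   (\<lambda>j. if j \<in> J then (\<lambda>t. d j * p j t) else q j) m"
    by (rule interleave_cong) (simp add: exchanged kept)
  moreover have "finite J" using J finite_subset by blast
  then have "h (interleave (\<lambda>j. if j \<in> J then (\<lambda>t. c j * q j t) else p j)
                            (\<lambda>j. if j \<in> J then (\<lambda>t. d j * p j t) else q j) m)
      = (\<Prod>j\<in>J. - (c j * d j)) * h (interleave p q m)"
    using J
  proof (induction J rule: finite_induct)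
    case empty
    then show ?case by simp
  next
    case (insert a F)
    define P where "P = (\<lambda>j. if j \<in> F then (\<lambda>t. c j * q j t) else p j)"
    define Q where "Q = (\<lambda>j. if j \<in> F then (\<lambda>t. d j * p j t) else q j)"
    have VPQ: "\<forall>j<m. P j \<in> Vsp l \<and> Q j \<in> Vsp l"
      using V by (auto simp: P_def Q_def scale_in_Vsp)
    have "(\<lambda>j. if j \<in> insert a F then (\<lambda>t. c j * q j t) else p j) = P(a := (\<lambda>t. c a * Q a t))"
      and "(\<lambda>j. if j \<in> insert a F then (\<lambda>t. d j * p j t) else q j) = Q(a := (\<lambda>t. d a * P a t))"
      using insert(2) by (auto simp: P_def Q_def)
    moreover have "a < m" using insert by auto
    ultimately show ?case
      using exterior_form_interleave_exchange[OF ext VPQ, of a "c a" "d a"] insert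
      by (simp add: P_def Q_def)
  qed
  ultimately show ?thesis by simp
qed

definition shift_sign :: "nat \<Rightarrow> complex" where
  "shift_sign s = (if s = 0 then 1 else -1)"

definition reflect_on :: "'a set \<Rightarrow> nat \<Rightarrow> ('a \<Rightarrow> nat) \<Rightarrow> 'a \<Rightarrow> nat" where
  "reflect_on A l \<psi> e = (if e \<in> A then l - \<psi> e else \<psi> e)"

lemma evec_reflect:
  "1 \<le> p \<Longrightarrow> p \<le> l \<Longrightarrow> s \<in> {0, l} \<Longrightarrow> evec (p + (l - s)) = (\<lambda>t. - shift_sign s * fvec l (p + s) t)"
  by (auto simp: fvec_def shift_sign_def)

lemma fvec_reflect:
  "1 \<le> p \<Longrightarrow> p \<le> l \<Longrightarrow> s \<in> {0, l} \<Longrightarrow> fvec l (p + (l - s)) = (\<lambda>t. shift_sign s * evec (p + s) t)"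
  by (auto simp: fvec_def shift_sign_def)

lemma reflect_on_in_PiE:
  assumes "A \<subseteq> E" "\<psi> \<in> PiE E (\<lambda>_. {0, l})"
  shows "reflect_on A l \<psi> \<in> PiE E (\<lambda>_. {0, l})"
  using assms by (auto simp: PiE_iff extensional_def reflect_on_def)

lemma reflect_on_reflect_on:
  assumes "A \<subseteq> E" "\<psi> \<in> PiE E (\<lambda>_. {0, l})"
  shows "reflect_on A l (reflect_on A l \<psi>) = \<psi>"
  using assms by (fastforce simp: PiE_iff reflect_on_def)

lemma bij_betw_reflect_on:
  assumes "A \<subseteq> E"
  shows "bij_betw (reflect_on A l) (PiE E (\<lambda>_. {0, l})) (PiE E (\<lambda>_. {0, l}))"
  using reflect_on_reflect_on[OF assms] reflect_on_in_PiE[OF assms]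
  by (intro bij_betw_byWitness[where f' = "reflect_on A l"] ballI image_subsetI) simp_all

section \<open>Cyclic chains\<close>

definition cyclic_chain :: "('a \<Rightarrow> 'a \<Rightarrow> bool) \<Rightarrow> 'a list \<Rightarrow> bool" where
  "cyclic_chain R es \<longleftrightarrow> es \<noteq> [] \<and> (\<forall>i<length es. R (es ! i) (es ! ((i + 1) mod length es)))"

lemma kcircuit_iff_cyclic_chain:
  "kcircuit E \<omega> kin kout es \<longleftrightarrow> distinct es \<and> set es \<subseteq> E \<and> cyclic_chain (follows \<omega> kin kout) es"
  by (auto simp: kcircuit_def cyclic_chain_def)

lemma cyclic_chain_mono:
  "cyclic_chain R es \<Longrightarrow> (\<And>x y. x \<in> set es \<Longrightarrow> y \<in> set es \<Longrightarrow> R x y \<Longrightarrow> R' x y)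
    \<Longrightarrow> cyclic_chain R' es"
  unfolding cyclic_chain_def by (metis length_greater_0_conv mod_less_divisor nth_mem)

lemma cyclic_chain_rev:
  assumes "cyclic_chain R es"
  shows "cyclic_chain (\<lambda>x y. R y x) (rev es)"
  unfolding cyclic_chain_def
proof (intro conjI allI impI)
  show "rev es \<noteq> []" using assms by (simp add: cyclic_chain_def)
  fix i assume "i < length (rev es)"
  then have i: "i < length es" by simp
  define k where "k = length es - Suc ((i + 1) mod length es)"
  have k: "k < length es" using i by (simp add: k_def)
  have "(k + 1) mod length es = length es - Suc i"
  proof (cases "i + 1 < length es")
    case True
    then show ?thesis by (simp add: k_def)
  next
    case False
    then have "i + 1 = length es" using i by simp
    then show ?thesis by (simp add: k_def flip: \<open>i + 1 = length es\<close>)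
  qed
  moreover have "R (es ! k) (es ! ((k + 1) mod length es))"
    using assms k by (simp add: cyclic_chain_def)
  moreover have "(i + 1) mod length es < length es"
    using i by (metis gr_implies_not0 mod_less_divisor not_gr_zero)
  then have "rev es ! ((i + 1) mod length (rev es)) = es ! k"
    by (simp add: rev_nth k_def)
  ultimately show "R (rev es ! ((i + 1) mod length (rev es))) (rev es ! i)"
    using i by (simp add: rev_nth)
qed

context
  fixes R :: "'a \<Rightarrow> 'a \<Rightarrow> bool" and A :: "'a set"
  assumes right_unique: "\<And>x y y'. x \<in> A \<Longrightarrow> y \<in> A \<Longrightarrow> y' \<in> A \<Longrightarrow> R x y \<Longrightarrow> R x y' \<Longrightarrow> y = y'"
begin

lemma cyclic_chain_nth_shift:
  assumes es: "cyclic_chain R es" "set es \<subseteq> A" and cs: "cyclic_chain R cs" "set cs \<subseteq> A"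
    and i: "i < length es" and k: "k < length cs" and eq: "es ! i = cs ! k"
  shows "es ! ((i + t) mod length es) = cs ! ((k + t) mod length cs)"
proof (induction t)
  case 0
  then show ?case using i k eq by simp
next
  case (Suc t)
  define a where "a = (i + t) mod length es"
  define b where "b = (k + t) mod length cs"
  have n: "0 < length es" "0 < length cs" using i k by auto
  then have a: "a < length es" and b: "b < length cs" by (simp_all add: a_def b_def)
  have "R (es ! a) (es ! ((a + 1) mod length es))" and "R (cs ! b) (cs ! ((b + 1) mod length cs))"
    using es(1) cs(1) a b by (simp_all add: cyclic_chain_def)
  moreover have "es ! a = cs ! b" using Suc by (simp add: a_def b_def)
  moreover have "es ! a \<in> A" "es ! ((a + 1) mod length es) \<in> A" "cs ! ((b + 1) mod length cs) \<in> A"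
    using es(2) cs(2) a b n by (meson mod_less_divisor nth_mem subsetD)+
  ultimately have "es ! ((a + 1) mod length es) = cs ! ((b + 1) mod length cs)"
    using right_unique by metis
  then show ?case by (simp add: a_def b_def mod_Suc_eq)
qed

lemma cyclic_chain_set_subset:
  assumes es: "cyclic_chain R es" "set es \<subseteq> A" and cs: "cyclic_chain R cs" "set cs \<subseteq> A"
    and x: "x \<in> set es" "x \<in> set cs"
  shows "set es \<subseteq> set cs"
proof
  fix y assume "y \<in> set es"
  then obtain p where p: "p < length es" "y = es ! p" by (auto simp: in_set_conv_nth)
  obtain i where i: "i < length es" "es ! i = x" using x by (auto simp: in_set_conv_nth)
  obtain k where k: "k < length cs" "cs ! k = x" using x by (auto simp: in_set_conv_nth)
  have "es ! ((i + (p + length es - i)) mod length es) = cs ! ((k + (p + length es - i)) mod length cs)"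
    by (rule cyclic_chain_nth_shift[OF es cs i(1) k(1)]) (use i k in simp)
  moreover have "(i + (p + length es - i)) mod length es = p" using i p by simp
  moreover have "(k + (p + length es - i)) mod length cs < length cs"
    using k by (metis gr_implies_not0 mod_less_divisor not_gr_zero)
  ultimately show "y \<in> set cs" using p by (metis nth_mem)
qed

lemma cyclic_chain_set_eq:
  assumes "cyclic_chain R es" "set es \<subseteq> A" "cyclic_chain R cs" "set cs \<subseteq> A"
    and "x \<in> set es" "x \<in> set cs"
  shows "set es = set cs"
  using cyclic_chain_set_subset[OF assms] cyclic_chain_set_subset[OF assms(3,4,1,2,6,5)] by blast

lemma cyclic_chain_sets_subset:
  assumes D: "cyclic_chain R D" "set D \<subseteq> A"
    and D': "distinct D'" "cyclic_chain R' D'" "set D' = set D"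
    and off: "\<And>x y. x \<in> A - set D \<Longrightarrow> y \<in> A - set D \<Longrightarrow> R x y \<Longrightarrow> R' x y"
  shows "{set es |es. distinct es \<and> set es \<subseteq> A \<and> cyclic_chain R es}
    \<subseteq> {set es |es. distinct es \<and> set es \<subseteq> A \<and> cyclic_chain R' es}"
proof clarify
  fix es assume es: "distinct es" "set es \<subseteq> A" "cyclic_chain R es"
  show "\<exists>es'. set es = set es' \<and> distinct es' \<and> set es' \<subseteq> A \<and> cyclic_chain R' es'"
  proof (cases "set es \<inter> set D = {}")
    case True
    have "cyclic_chain R' es"
      by (rule cyclic_chain_mono[OF es(3)], rule off) (use True es(2) in auto)
    then show ?thesis using es by blast
  next
    case False
    then obtain x where "x \<in> set es" "x \<in> set D" by blast
    then have "set es = set D'"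
      using cyclic_chain_set_eq[OF es(3,2) D] D'(3) by simp
    then show ?thesis using D D' by auto
  qed
qed

end

definition cyc_index :: "'a list \<Rightarrow> 'a \<Rightarrow> nat" where
  "cyc_index cs e = (THE k. k < length cs \<and> cs ! k = e)"

definition cyc_next :: "'a list \<Rightarrow> 'a \<Rightarrow> 'a" where
  "cyc_next cs e = (if e \<in> set cs then cs ! ((cyc_index cs e + 1) mod length cs) else e)"

definition cyc_prev :: "'a list \<Rightarrow> 'a \<Rightarrow> 'a" where
  "cyc_prev cs e = (if e \<in> set cs then cs ! ((cyc_index cs e + length cs - 1) mod length cs) else e)"

lemma cyc_index_nth: "distinct cs \<Longrightarrow> k < length cs \<Longrightarrow> cyc_index cs (cs ! k) = k"
  unfolding cyc_index_def by (rule the_equality) (auto simp: nth_eq_iff_index_eq)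

lemma cyc_next_nth:
  "distinct cs \<Longrightarrow> k < length cs \<Longrightarrow> cyc_next cs (cs ! k) = cs ! ((k + 1) mod length cs)"
  by (simp add: cyc_next_def cyc_index_nth)

lemma cyc_prev_nth:
  "distinct cs \<Longrightarrow> k < length cs \<Longrightarrow> cyc_prev cs (cs ! k) = cs ! ((k + length cs - 1) mod length cs)"
  by (simp add: cyc_prev_def cyc_index_nth)

lemma cyc_next_notin: "e \<notin> set cs \<Longrightarrow> cyc_next cs e = e"
  by (simp add: cyc_next_def)

lemma cyc_prev_notin: "e \<notin> set cs \<Longrightarrow> cyc_prev cs e = e"
  by (simp add: cyc_prev_def)

lemma cyc_next_in_set: "e \<in> set cs \<Longrightarrow> cyc_next cs e \<in> set cs"
  using length_pos_if_in_set[of e cs] by (auto simp: cyc_next_def)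

lemma cyc_prev_in_set: "e \<in> set cs \<Longrightarrow> cyc_prev cs e \<in> set cs"
  using length_pos_if_in_set[of e cs] by (auto simp: cyc_prev_def)

lemma cyc_prev_next:
  assumes "distinct cs"
  shows "cyc_prev cs (cyc_next cs e) = e"
proof (cases "e \<in> set cs")
  case True
  then obtain k where k: "k < length cs" "e = cs ! k" by (auto simp: in_set_conv_nth)
  moreover have "((k + 1) mod length cs + length cs - 1) mod length cs = k"
    using k by (cases "Suc k = length cs") auto
  moreover have "(k + 1) mod length cs < length cs"
    using k by (metis gr_implies_not0 mod_less_divisor not_gr_zero)
  ultimately show ?thesis
    using assms by (simp add: cyc_next_nth cyc_prev_nth)
qed (simp add: cyc_next_notin cyc_prev_notin)

lemma cyc_next_prev:
  assumes "distinct cs"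
  shows "cyc_next cs (cyc_prev cs e) = e"
proof (cases "e \<in> set cs")
  case True
  then obtain k where k: "k < length cs" "e = cs ! k" by (auto simp: in_set_conv_nth)
  moreover have "((k + length cs - 1) mod length cs + 1) mod length cs = k"
    using k by (cases k) (auto simp: mod_if)
  moreover have "(k + length cs - 1) mod length cs < length cs"
    using k by (metis gr_implies_not0 mod_less_divisor not_gr_zero)
  ultimately show ?thesis
    using assms by (simp add: cyc_next_nth cyc_prev_nth)
qed (simp add: cyc_next_notin cyc_prev_notin)

lemma bij_betw_cyc_next: "distinct cs \<Longrightarrow> bij_betw (cyc_next cs) (set cs) (set cs)"
  by (rule bij_betw_byWitness[where f' = "cyc_prev cs"])
    (auto simp: cyc_prev_next cyc_next_prev cyc_next_in_set cyc_prev_in_set)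

lemma vertex_tensor_eq_interleave:
  "vertex_tensor l E inc \<omega> kin kout g v
    = interleave (\<lambda>j. evec (g (kinv_in E \<omega> kin v (2*j+1))))
                 (\<lambda>j. fvec l (g (kinv_out E \<omega> kout v (2*j+2)))) (deg E inc v div 2)"
  unfolding vertex_tensor_def by (rule concat_map_pair_eq_interleave)

context
  fixes V :: "'v set" and E :: "'e set" and inc :: "'e \<Rightarrow> 'v set"
    and \<omega> :: "'e \<Rightarrow> 'v \<times> 'v" and kin kout :: "'e \<Rightarrow> nat"
  assumes compatible: "compatible_ordering V E inc \<omega> kin kout"
begin

lemma kinv_in_eqI: "v \<in> V \<Longrightarrow> e \<in> E \<Longrightarrow> snd (\<omega> e) = v \<Longrightarrow> kinv_in E \<omega> kin v (kin e) = e"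
  using compatible unfolding compatible_ordering_def kinv_in_def bij_betw_def inj_on_def
  by (intro the_equality) auto

lemma kinv_out_eqI: "v \<in> V \<Longrightarrow> e \<in> E \<Longrightarrow> fst (\<omega> e) = v \<Longrightarrow> kinv_out E \<omega> kout v (kout e) = e"
  using compatible unfolding compatible_ordering_def kinv_out_def bij_betw_def inj_on_def
  by (intro the_equality) auto

lemma kinv_in_mem:
  assumes v: "v \<in> V" and i: "odd i" "i < deg E inc v"
  shows "kinv_in E \<omega> kin v i \<in> E \<and> snd (\<omega> (kinv_in E \<omega> kin v i)) = v \<and> kin (kinv_in E \<omega> kin v i) = i"
proof -
  have "i \<in> kin ` {e\<in>E. snd (\<omega> e) = v}"
    using compatible v i by (simp add: compatible_ordering_def bij_betw_def)
  then obtain e where e: "e \<in> E" "snd (\<omega> e) = v" "kin e = i" by auto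
  then have "kinv_in E \<omega> kin v i = e" using kinv_in_eqI[OF v] by blast
  then show ?thesis using e by simp
qed

lemma kinv_out_mem:
  assumes v: "v \<in> V" and i: "even i" "0 < i" "i \<le> deg E inc v"
  shows "kinv_out E \<omega> kout v i \<in> E \<and> fst (\<omega> (kinv_out E \<omega> kout v i)) = v \<and> kout (kinv_out E \<omega> kout v i) = i"
proof -
  have "i \<in> kout ` {e\<in>E. fst (\<omega> e) = v}"
    using compatible v i by (simp add: compatible_ordering_def bij_betw_def)
  then obtain e where e: "e \<in> E" "fst (\<omega> e) = v" "kout e = i" by auto
  then have "kinv_out E \<omega> kout v i = e" using kinv_out_eqI[OF v] by blast
  then show ?thesis using e by simp
qed

lemma bij_betw_kinv_in:
  assumes v: "v \<in> V"
  shows "bij_betw (\<lambda>j. kinv_in E \<omega> kin v (2*j+1)) {..<deg E inc v div 2} {e\<in>E. snd (\<omega> e) = v}"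
proof (rule bij_betw_byWitness[where f' = "\<lambda>e. kin e div 2"])
  have odd: "odd (kin e) \<and> kin e < deg E inc v" if "e \<in> E" "snd (\<omega> e) = v" for e
  proof -
    have "kin e \<in> kin ` {e\<in>E. snd (\<omega> e) = v}" using that by blast
    then show ?thesis using compatible v by (simp add: compatible_ordering_def bij_betw_def)
  qed
  show "\<forall>e\<in>{e\<in>E. snd (\<omega> e) = v}. kinv_in E \<omega> kin v (2 * (kin e div 2) + 1) = e"
    using odd kinv_in_eqI[OF v] by (metis (mono_tags, lifting) mem_Collect_eq odd_two_times_div_two_succ)
  show "(\<lambda>e. kin e div 2) ` {e\<in>E. snd (\<omega> e) = v} \<subseteq> {..<deg E inc v div 2}"
  proof
    fix j assume "j \<in> (\<lambda>e. kin e div 2) ` {e\<in>E. snd (\<omega> e) = v}"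
    then obtain e where "e \<in> E" "snd (\<omega> e) = v" "j = kin e div 2" by auto
    then have "2*j+1 < deg E inc v" using odd by fastforce
    then show "j \<in> {..<deg E inc v div 2}" by simp
  qed
  have "2*j+1 < deg E inc v" if "j < deg E inc v div 2" for j
    using that by linarith
  then show "\<forall>j\<in>{..<deg E inc v div 2}. kin (kinv_in E \<omega> kin v (2*j+1)) div 2 = j"
    and "(\<lambda>j. kinv_in E \<omega> kin v (2*j+1)) ` {..<deg E inc v div 2} \<subseteq> {e\<in>E. snd (\<omega> e) = v}"
    using kinv_in_mem[OF v] by auto
qed

end

section \<open>Reversing a \<open>\<kappa>\<close>-circuit\<close>

locale circuit_reversal =
  fixes V :: "'v set" and E :: "'e set" and inc :: "'e \<Rightarrow> 'v set"
    and \<omega> \<omega>' :: "'e \<Rightarrow> 'v \<times> 'v" and kin kout kin' kout' :: "'e \<Rightarrow> nat" and C :: "'e list"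
  assumes graph: "graph V E inc"
    and orientation: "orientation E inc \<omega>"
    and compatible: "compatible_ordering V E inc \<omega> kin kout"
    and circuit: "kcircuit E \<omega> kin kout C"
    and reversed_orientation: "\<forall>e\<in>E. \<omega>' e = (if e \<in> set C then prod.swap (\<omega> e) else \<omega> e)"
    and relabelled_circuit: "\<forall>i < length C. kout' (C ! i) = kout (C ! ((i + 1) mod length C)) \<and>
                                kin' (C ! ((i + 1) mod length C)) = kin (C ! i)"
    and unchanged_off_circuit: "\<forall>e \<in> E - set C. kin' e = kin e \<and> kout' e = kout e"
begin

lemma circuit_subset: "set C \<subseteq> E" and distinct_circuit: "distinct C"
  using circuit by (auto simp: kcircuit_def)

lemma finite_E: "finite E" and finite_V: "finite V"
  using graph by (auto simp: graph_def)

lemma arc_ends_in_V: "e \<in> E \<Longrightarrow> fst (\<omega> e) \<in> V \<and> snd (\<omega> e) \<in> V"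
  using graph orientation unfolding graph_def orientation_def by blast

lemma cyc_next_in_E: "e \<in> E \<Longrightarrow> cyc_next C e \<in> E"
  using circuit_subset cyc_next_in_set[of e C] cyc_next_notin[of e C] by (cases "e \<in> set C") auto

lemma cyc_prev_in_E: "e \<in> E \<Longrightarrow> cyc_prev C e \<in> E"
  using circuit_subset cyc_prev_in_set[of e C] cyc_prev_notin[of e C] by (cases "e \<in> set C") auto

lemma follows_cyc_next:
  assumes "e \<in> set C"
  shows "follows \<omega> kin kout e (cyc_next C e)"
proof -
  obtain k where "k < length C" "e = C ! k" using assms by (auto simp: in_set_conv_nth)
  then show ?thesis
    using circuit distinct_circuit by (simp add: kcircuit_def cyc_next_nth)
qed

lemma follows_cyc_prev: "e \<in> set C \<Longrightarrow> follows \<omega> kin kout (cyc_prev C e) e"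
  using follows_cyc_next[OF cyc_prev_in_set] cyc_next_prev[OF distinct_circuit] by metis

lemma relabelled_cyc_next:
  assumes "e \<in> set C"
  shows "kout' e = kout (cyc_next C e)" and "kin' (cyc_next C e) = kin e"
proof -
  obtain k where "k < length C" "e = C ! k" using assms by (auto simp: in_set_conv_nth)
  then show "kout' e = kout (cyc_next C e)" and "kin' (cyc_next C e) = kin e"
    using relabelled_circuit distinct_circuit by (simp_all add: cyc_next_nth)
qed

lemma head_reversed:
  assumes e: "e \<in> E"
  shows "snd (\<omega>' e) = snd (\<omega> (cyc_prev C e)) \<and> kin' e = kin (cyc_prev C e)"
proof (cases "e \<in> set C")
  case True
  have "kin' e = kin (cyc_prev C e)"
    using relabelled_cyc_next(2)[OF cyc_prev_in_set[OF True]] cyc_next_prev[OF distinct_circuit] by simp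
  then show ?thesis
    using follows_cyc_prev[OF True] reversed_orientation e True by (simp add: follows_def)
next
  case False
  then show ?thesis using reversed_orientation unchanged_off_circuit e by (simp add: cyc_prev_notin)
qed

lemma tail_reversed:
  assumes e: "e \<in> E"
  shows "fst (\<omega>' e) = fst (\<omega> (cyc_next C e)) \<and> kout' e = kout (cyc_next C e)"
proof (cases "e \<in> set C")
  case True
  then show ?thesis
    using follows_cyc_next[OF True] relabelled_cyc_next(1)[OF True] reversed_orientation e
    by (simp add: follows_def)
next
  case False
  then show ?thesis using reversed_orientation unchanged_off_circuit e by (simp add: cyc_next_notin)
qed

lemma follows_reversed:
  "x \<in> E \<Longrightarrow> y \<in> E \<Longrightarrow>
    follows \<omega>' kin' kout' x y \<longleftrightarrow> follows \<omega> kin kout (cyc_prev C x) (cyc_next C y)"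
  using head_reversed[of x] tail_reversed[of y] by (simp add: follows_def)

lemma kinv_in_reversed:
  assumes v: "v \<in> V" and i: "odd i" "i < deg E inc v"
  shows "kinv_in E \<omega>' kin' v i = cyc_next C (kinv_in E \<omega> kin v i)"
proof -
  define a where "a = kinv_in E \<omega> kin v i"
  have a: "a \<in> E" "snd (\<omega> a) = v" "kin a = i"
    using kinv_in_mem[OF compatible v i] by (simp_all add: a_def)
  show ?thesis
    unfolding kinv_in_def[of E \<omega>'] a_def[symmetric]
  proof (rule the_equality)
    show "cyc_next C a \<in> E \<and> snd (\<omega>' (cyc_next C a)) = v \<and> kin' (cyc_next C a) = i"
      using head_reversed[OF cyc_next_in_E] cyc_next_in_E cyc_prev_next[OF distinct_circuit] a by simp
  next
    fix e assume "e \<in> E \<and> snd (\<omega>' e) = v \<and> kin' e = i"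
    then have "cyc_prev C e = a"
      using head_reversed kinv_in_eqI[OF compatible v] cyc_prev_in_E a_def by metis
    then show "e = cyc_next C a" using cyc_next_prev[OF distinct_circuit] by metis
  qed
qed

lemma kinv_out_reversed:
  assumes v: "v \<in> V" and i: "even i" "0 < i" "i \<le> deg E inc v"
  shows "kinv_out E \<omega>' kout' v i = cyc_prev C (kinv_out E \<omega> kout v i)"
proof -
  define b where "b = kinv_out E \<omega> kout v i"
  have b: "b \<in> E" "fst (\<omega> b) = v" "kout b = i"
    using kinv_out_mem[OF compatible v i] by (simp_all add: b_def)
  show ?thesis
    unfolding kinv_out_def[of E \<omega>'] b_def[symmetric]
  proof (rule the_equality)
    show "cyc_prev C b \<in> E \<and> fst (\<omega>' (cyc_prev C b)) = v \<and> kout' (cyc_prev C b) = i"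
      using tail_reversed[OF cyc_prev_in_E] cyc_prev_in_E cyc_next_prev[OF distinct_circuit] b by simp
  next
    fix e assume "e \<in> E \<and> fst (\<omega>' e) = v \<and> kout' e = i"
    then have "cyc_next C e = b"
      using tail_reversed kinv_out_eqI[OF compatible v] cyc_next_in_E b_def by metis
    then show "e = cyc_prev C b" using cyc_prev_next[OF distinct_circuit] by metis
  qed
qed

lemma circuit_passage:
  assumes v: "v \<in> V" and j: "j < deg E inc v div 2"
  defines "a \<equiv> kinv_in E \<omega> kin v (2*j+1)" and "b \<equiv> kinv_out E \<omega> kout v (2*j+2)"
  shows "a \<in> set C \<Longrightarrow> cyc_next C a = b" and "a \<in> set C \<longleftrightarrow> b \<in> set C"
proof -
  have "2*j+1 < deg E inc v" "2*j+2 \<le> deg E inc v" using j by linarith+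
  then have a: "a \<in> E" "snd (\<omega> a) = v" "kin a = 2*j+1"
    and b: "b \<in> E" "fst (\<omega> b) = v" "kout b = 2*j+2"
    using kinv_in_mem[OF compatible v, of "2*j+1"] kinv_out_mem[OF compatible v, of "2*j+2"]
    by (simp_all add: a_def b_def)
  show next_a: "cyc_next C a = b" if "a \<in> set C"
  proof -
    have "follows \<omega> kin kout a (cyc_next C a)" by (rule follows_cyc_next[OF that])
    then show ?thesis
      using kinv_out_eqI[OF compatible v cyc_next_in_E[OF a(1)]] a by (simp add: follows_def b_def)
  qed
  have "cyc_prev C b = a" if "b \<in> set C"
  proof -
    have "follows \<omega> kin kout (cyc_prev C b) b" by (rule follows_cyc_prev[OF that])
    then show ?thesis
      using kinv_in_eqI[OF compatible v cyc_prev_in_E[OF b(1)]] b by (simp add: follows_def a_def)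
  qed
  then show "a \<in> set C \<longleftrightarrow> b \<in> set C"
    using next_a cyc_next_in_set cyc_prev_in_set by metis
qed

lemma follows_right_unique:
  assumes "x \<in> E" "y \<in> E" "y' \<in> E" "follows \<omega> kin kout x y" "follows \<omega> kin kout x y'"
  shows "y = y'"
proof -
  have v: "snd (\<omega> x) \<in> V" using arc_ends_in_V assms(1) by blast
  have "kinv_out E \<omega> kout (snd (\<omega> x)) (kout y) = y"
    by (rule kinv_out_eqI[OF compatible v assms(2)]) (use assms(4) in \<open>simp add: follows_def\<close>)
  moreover have "kinv_out E \<omega> kout (snd (\<omega> x)) (kout y') = y'"
    by (rule kinv_out_eqI[OF compatible v assms(3)]) (use assms(5) in \<open>simp add: follows_def\<close>)
  moreover have "kout y = kout y'" using assms(4,5) by (simp add: follows_def)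
  ultimately show ?thesis by metis
qed

lemma follows_reversed_right_unique:
  assumes "x \<in> E" "y \<in> E" "y' \<in> E" "follows \<omega>' kin' kout' x y" "follows \<omega>' kin' kout' x y'"
  shows "y = y'"
proof -
  have "follows \<omega> kin kout (cyc_prev C x) (cyc_next C y)"
    and "follows \<omega> kin kout (cyc_prev C x) (cyc_next C y')"
    using assms follows_reversed[OF assms(1)] by simp_all
  then have "cyc_next C y = cyc_next C y'"
    by (rule follows_right_unique[OF cyc_prev_in_E cyc_next_in_E cyc_next_in_E, OF assms(1-3)])
  then show ?thesis using cyc_prev_next[OF distinct_circuit] by metis
qed

lemma cyclic_chain_reversed_circuit: "cyclic_chain (follows \<omega>' kin' kout') (rev C)"
proof -
  have "cyclic_chain (\<lambda>x y. follows \<omega>' kin' kout' y x) C"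
  proof (rule cyclic_chain_mono)
    show "cyclic_chain (follows \<omega> kin kout) C" using circuit by (simp add: kcircuit_iff_cyclic_chain)
  next
    fix x y assume xy: "x \<in> set C" "y \<in> set C" "follows \<omega> kin kout x y"
    have E: "x \<in> E" "y \<in> E" "cyc_next C x \<in> E"
      using xy circuit_subset cyc_next_in_E by auto
    have "y = cyc_next C x"
      by (rule follows_right_unique[OF E xy(3) follows_cyc_next[OF xy(1)]])
    then show "follows \<omega>' kin' kout' y x"
      using follows_reversed[OF E(2,1)] xy(3) by (simp add: cyc_prev_next[OF distinct_circuit])
  qed
  then show ?thesis by (rule cyclic_chain_rev)
qed

lemma ncirc_reversed: "ncirc E \<omega>' kin' kout' = ncirc E \<omega> kin kout"
proof -
  have off: "follows \<omega> kin kout x y \<longleftrightarrow> follows \<omega>' kin' kout' x y"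
    if "x \<in> E - set C" "y \<in> E - set C" for x y
    using that reversed_orientation unchanged_off_circuit by (simp add: follows_def)
  have old: "cyclic_chain (follows \<omega> kin kout) C"
    using circuit by (simp add: kcircuit_iff_cyclic_chain)
  have rev_C: "distinct (rev C)" "set (rev C) \<subseteq> E" "set (rev C) = set C"
    using distinct_circuit circuit_subset by simp_all
  have old_sub: "{set es |es. kcircuit E \<omega> kin kout es} \<subseteq> {set es |es. kcircuit E \<omega>' kin' kout' es}"
    unfolding kcircuit_iff_cyclic_chain
    by (rule cyclic_chain_sets_subset[where D = C and D' = "rev C"])
      (fact follows_right_unique old circuit_subset rev_C cyclic_chain_reversed_circuit | use off in metis)+
  have new_sub: "{set es |es. kcircuit E \<omega>' kin' kout' es} \<subseteq> {set es |es. kcircuit E \<omega> kin kout es}"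
    unfolding kcircuit_iff_cyclic_chain
    by (rule cyclic_chain_sets_subset[where D = "rev C" and D' = C])
      (fact follows_reversed_right_unique cyclic_chain_reversed_circuit rev_C distinct_circuit old
        | use off rev_C(3) in metis)+
  show ?thesis
    unfolding ncirc_def subset_antisym[OF new_sub old_sub] ..
qed

definition circuit_sign :: "('e \<Rightarrow> nat) \<Rightarrow> 'e \<Rightarrow> complex" where
  "circuit_sign \<psi> e = (if e \<in> set C then shift_sign (\<psi> e) * shift_sign (\<psi> (cyc_next C e)) else 1)"

lemma vertex_tensor_reversed:
  assumes v: "v \<in> V"
  shows "vertex_tensor l E inc \<omega>' kin' kout' g v
    = interleave (\<lambda>j. evec (g (cyc_next C (kinv_in E \<omega> kin v (2*j+1)))))
                 (\<lambda>j. fvec l (g (cyc_prev C (kinv_out E \<omega> kout v (2*j+2))))) (deg E inc v div 2)"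
  unfolding vertex_tensor_eq_interleave
proof (rule interleave_cong)
  fix j assume "j < deg E inc v div 2"
  then have "2*j+1 < deg E inc v" "2*j+2 \<le> deg E inc v" by linarith+
  then show "evec (g (kinv_in E \<omega>' kin' v (2*j+1))) = evec (g (cyc_next C (kinv_in E \<omega> kin v (2*j+1)))) \<and>
      fvec l (g (kinv_out E \<omega>' kout' v (2*j+2))) = fvec l (g (cyc_prev C (kinv_out E \<omega> kout v (2*j+2))))"
    by (simp add: kinv_in_reversed[OF v] kinv_out_reversed[OF v])
qed

lemma prod_circuit_sign_at_vertex:
  assumes v: "v \<in> V"
  shows "(\<Prod>j | j < deg E inc v div 2 \<and> kinv_in E \<omega> kin v (2*j+1) \<in> set C.
            shift_sign (\<psi> (kinv_in E \<omega> kin v (2*j+1))) * shift_sign (\<psi> (kinv_out E \<omega> kout v (2*j+2))))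
    = (\<Prod>e\<in>{e\<in>E. snd (\<omega> e) = v}. circuit_sign \<psi> e)"
proof -
  have "(\<Prod>j | j < deg E inc v div 2 \<and> kinv_in E \<omega> kin v (2*j+1) \<in> set C.
            shift_sign (\<psi> (kinv_in E \<omega> kin v (2*j+1))) * shift_sign (\<psi> (kinv_out E \<omega> kout v (2*j+2))))
      = (\<Prod>j<deg E inc v div 2. circuit_sign \<psi> (kinv_in E \<omega> kin v (2*j+1)))"
  proof (rule prod.mono_neutral_cong_left)
    fix j assume "j \<in> {j. j < deg E inc v div 2 \<and> kinv_in E \<omega> kin v (2*j+1) \<in> set C}"
    then show "shift_sign (\<psi> (kinv_in E \<omega> kin v (2*j+1))) * shift_sign (\<psi> (kinv_out E \<omega> kout v (2*j+2)))
        = circuit_sign \<psi> (kinv_in E \<omega> kin v (2*j+1))"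
      using circuit_passage(1)[OF v, of j] by (simp add: circuit_sign_def)
  qed (auto simp: circuit_sign_def)
  also have "\<dots> = (\<Prod>e\<in>{e\<in>E. snd (\<omega> e) = v}. circuit_sign \<psi> e)"
    by (rule prod.reindex_bij_betw[OF bij_betw_kinv_in[OF compatible v]])
  finally show ?thesis .
qed

lemma prod_circuit_sign: "(\<Prod>e\<in>E. circuit_sign \<psi> e) = 1"
proof -
  have "(\<Prod>e\<in>E. circuit_sign \<psi> e) = (\<Prod>e\<in>set C. shift_sign (\<psi> e) * shift_sign (\<psi> (cyc_next C e)))"
    by (rule prod.mono_neutral_cong_right[OF finite_E circuit_subset]) (simp_all add: circuit_sign_def)
  also have "\<dots> = (\<Prod>e\<in>set C. shift_sign (\<psi> e)) * (\<Prod>e\<in>set C. shift_sign (\<psi> (cyc_next C e)))"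
    by (rule prod.distrib)
  also have "(\<Prod>e\<in>set C. shift_sign (\<psi> (cyc_next C e))) = (\<Prod>e\<in>set C. shift_sign (\<psi> e))"
    by (rule prod.reindex_bij_betw[OF bij_betw_cyc_next[OF distinct_circuit]])
  also have "(\<Prod>e\<in>set C. shift_sign (\<psi> e)) * (\<Prod>e\<in>set C. shift_sign (\<psi> e))
      = (\<Prod>e\<in>set C. shift_sign (\<psi> e) * shift_sign (\<psi> e))"
    by (rule prod.distrib[symmetric])
  also have "\<dots> = 1"
    by (rule prod.neutral) (simp add: shift_sign_def)
  finally show ?thesis .
qed

lemma h_interleave_reflected:
  assumes ext: "exterior_form l h" and phi: "\<phi> \<in> E \<rightarrow> {1..l}" and psi: "\<psi> \<in> PiE E (\<lambda>_. {0, l})"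
    and v: "v \<in> V"
  defines "m \<equiv> deg E inc v div 2"
    and "a \<equiv> \<lambda>j. kinv_in E \<omega> kin v (2*j+1)" and "b \<equiv> \<lambda>j. kinv_out E \<omega> kout v (2*j+2)"
    and "g \<equiv> \<lambda>e. \<phi> e + \<psi> e" and "g' \<equiv> \<lambda>e. \<phi> e + reflect_on (set C) l \<psi> e"
  shows "h (interleave (\<lambda>j. evec (g' (cyc_next C (a j)))) (\<lambda>j. fvec l (g' (cyc_prev C (b j)))) m)
    = (\<Prod>j | j < m \<and> a j \<in> set C. shift_sign (\<psi> (a j)) * shift_sign (\<psi> (b j)))
      * h (interleave (\<lambda>j. evec (g (a j))) (\<lambda>j. fvec l (g (b j))) m)"
proof -
  define J where "J = {j. j < m \<and> a j \<in> set C}"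
  have range: "1 \<le> \<phi> e \<and> \<phi> e \<le> l \<and> \<psi> e \<in> {0, l}" if "e \<in> E" for e
    using phi psi that by (auto simp: PiE_iff)
  have ab: "a j \<in> E \<and> b j \<in> E" if "j < m" for j
  proof -
    have "2*j+1 < deg E inc v" "2*j+2 \<le> deg E inc v" using that unfolding m_def by linarith+
    then show ?thesis
      using kinv_in_mem[OF compatible v] kinv_out_mem[OF compatible v] by (simp add: a_def b_def)
  qed
  have in_Vsp: "\<forall>j<m. evec (g (a j)) \<in> Vsp l \<and> fvec l (g (b j)) \<in> Vsp l"
    using ab range by (force simp: g_def intro!: evec_in_Vsp fvec_in_Vsp)
  have "h (interleave (\<lambda>j. evec (g' (cyc_next C (a j)))) (\<lambda>j. fvec l (g' (cyc_prev C (b j)))) m)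
      = (\<Prod>j\<in>J. - (- shift_sign (\<psi> (b j)) * shift_sign (\<psi> (a j))))
        * h (interleave (\<lambda>j. evec (g (a j))) (\<lambda>j. fvec l (g (b j))) m)"
  proof (rule exterior_form_interleave_exchange_set[OF ext in_Vsp])
    show "J \<subseteq> {..<m}" by (auto simp: J_def)
  next
    fix j assume "j \<in> J"
    then have j: "j < m" "a j \<in> set C" by (simp_all add: J_def)
    then have "cyc_next C (a j) = b j" "b j \<in> set C"
      using circuit_passage[OF v, of j] by (simp_all add: m_def a_def b_def)
    moreover from this have "cyc_prev C (b j) = a j"
      using cyc_prev_next[OF distinct_circuit] by metis
    ultimately show "evec (g' (cyc_next C (a j))) = (\<lambda>t. - shift_sign (\<psi> (b j)) * fvec l (g (b j)) t) \<and>
        fvec l (g' (cyc_prev C (b j))) = (\<lambda>t. shift_sign (\<psi> (a j)) * evec (g (a j)) t)"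
      using evec_reflect fvec_reflect range ab j by (simp add: reflect_on_def g_def g'_def)
  next
    fix j assume "j < m" "j \<notin> J"
    then have "a j \<notin> set C" "b j \<notin> set C"
      using circuit_passage(2)[OF v, of j] by (simp_all add: J_def m_def a_def b_def)
    then show "evec (g' (cyc_next C (a j))) = evec (g (a j)) \<and> fvec l (g' (cyc_prev C (b j))) = fvec l (g (b j))"
      by (simp add: cyc_next_notin cyc_prev_notin reflect_on_def g_def g'_def)
  qed
  then show ?thesis
    by (simp add: J_def mult.commute)
qed

lemma h_vertex_tensor_reversed:
  assumes ext: "exterior_form l h" and phi: "\<phi> \<in> E \<rightarrow> {1..l}" and psi: "\<psi> \<in> PiE E (\<lambda>_. {0, l})"
    and v: "v \<in> V"
  shows "h (vertex_tensor l E inc \<omega>' kin' kout' (\<lambda>e. \<phi> e + reflect_on (set C) l \<psi> e) v)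
    = (\<Prod>e\<in>{e\<in>E. snd (\<omega> e) = v}. circuit_sign \<psi> e) * h (vertex_tensor l E inc \<omega> kin kout (\<lambda>e. \<phi> e + \<psi> e) v)"
  unfolding vertex_tensor_reversed[OF v]
  unfolding vertex_tensor_eq_interleave h_interleave_reflected[OF ext phi psi v]
    prod_circuit_sign_at_vertex[OF v] ..

lemma prod_h_vertex_tensor_reversed:
  assumes ext: "exterior_form l h" and phi: "\<phi> \<in> E \<rightarrow> {1..l}" and psi: "\<psi> \<in> PiE E (\<lambda>_. {0, l})"
  shows "(\<Prod>v\<in>V. h (vertex_tensor l E inc \<omega>' kin' kout' (\<lambda>e. \<phi> e + reflect_on (set C) l \<psi> e) v))
    = (\<Prod>v\<in>V. h (vertex_tensor l E inc \<omega> kin kout (\<lambda>e. \<phi> e + \<psi> e) v))"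
proof -
  have "(\<Prod>v\<in>V. h (vertex_tensor l E inc \<omega>' kin' kout' (\<lambda>e. \<phi> e + reflect_on (set C) l \<psi> e) v))
      = (\<Prod>v\<in>V. \<Prod>e\<in>{e\<in>E. snd (\<omega> e) = v}. circuit_sign \<psi> e)
        * (\<Prod>v\<in>V. h (vertex_tensor l E inc \<omega> kin kout (\<lambda>e. \<phi> e + \<psi> e) v))"
    by (simp add: h_vertex_tensor_reversed[OF ext phi psi] prod.distrib)
  also have "(\<Prod>v\<in>V. \<Prod>e\<in>{e\<in>E. snd (\<omega> e) = v}. circuit_sign \<psi> e) = (\<Prod>e\<in>E. circuit_sign \<psi> e)"
    by (rule prod.group[OF finite_E finite_V]) (use arc_ends_in_V in blast)
  finally show ?thesis
    by (simp add: prod_circuit_sign)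
qed

lemma s_val_reversed:
  assumes "exterior_form l h" "\<phi> \<in> E \<rightarrow> {1..l}"
  shows "s_val l h \<phi> V E inc \<omega> kin kout = s_val l h \<phi> V E inc \<omega>' kin' kout'"
proof -
  let ?P = "PiE E (\<lambda>_. {0::nat, l})"
  have "(\<Sum>\<psi>\<in>?P. \<Prod>v\<in>V. h (vertex_tensor l E inc \<omega>' kin' kout' (\<lambda>e. \<phi> e + \<psi> e) v))
      = (\<Sum>\<psi>\<in>?P. \<Prod>v\<in>V. h (vertex_tensor l E inc \<omega>' kin' kout' (\<lambda>e. \<phi> e + reflect_on (set C) l \<psi> e) v))"
    by (rule sum.reindex_bij_betw[OF bij_betw_reflect_on[OF circuit_subset], symmetric])
  also have "\<dots> = (\<Sum>\<psi>\<in>?P. \<Prod>v\<in>V. h (vertex_tensor l E inc \<omega> kin kout (\<lambda>e. \<phi> e + \<psi> e) v))"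
    by (rule sum.cong[OF refl]) (rule prod_h_vertex_tensor_reversed[OF assms])
  finally show ?thesis
    unfolding s_val_def ncirc_reversed by simp
qed

end

theorem lemma1:
  fixes l :: nat
    and h :: "(nat \<Rightarrow> complex) list \<Rightarrow> complex"
    and V :: "'v set" and E :: "'e set" and inc :: "'e \<Rightarrow> 'v set"
    and \<omega> \<omega>' :: "'e \<Rightarrow> 'v \<times> 'v"
    and kin kout kin' kout' :: "'e \<Rightarrow> nat"
    and \<phi> :: "'e \<Rightarrow> nat"
    and C :: "'e list"
  assumes "exterior_form l h"
    and "eulerian V E inc"
    and "eulerian_orientation V E inc \<omega>"
    and "compatible_ordering V E inc \<omega> kin kout"
    and "\<phi> \<in> E \<rightarrow> {1..l}"
    and "kcircuit E \<omega> kin kout C"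
    and "\<forall>e\<in>E. \<omega>' e = (if e \<in> set C then prod.swap (\<omega> e) else \<omega> e)"
    and "\<forall>i < length C. kout' (C ! i) = kout (C ! ((i + 1) mod length C)) \<and>
                        kin' (C ! ((i + 1) mod length C)) = kin (C ! i)"
    and "\<forall>e \<in> E - set C. kin' e = kin e \<and> kout' e = kout e"
  shows "s_val l h \<phi> V E inc \<omega> kin kout = s_val l h \<phi> V E inc \<omega>' kin' kout'"
proof -
  have "circuit_reversal V E inc \<omega> \<omega>' kin kout kin' kout' C"
    unfolding circuit_reversal_def
    using assms(2-4,6-9) by (simp add: eulerian_def eulerian_orientation_def)
  then show ?thesis
    by (rule circuit_reversal.s_val_reversed[OF _ assms(1,5)])
qed

end
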